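(* Let $F_1:\mathbb{C}\to\mathbb{R}$, $F_1(z)=|z|^2(\ln|z|^2-1)$ for $z\ne0$ and $F_1(0)=0$. For all $z_1,z_2\in\mathbb{C}$, setting $\zeta:=z_1-z_2$, $$F_1(z_1)\le F_1(z_2)+2\Re(z_2\overline{\zeta})\ln|z_2|^2+2|\zeta|^2\Big(\ln\big(\max(|z_2|,|z_1|)\big)+1\Big),$$ where, when $z_2=0$, the second term on the right-hand side is understood as $0$, and when moreover $z_1=0$, the last term is also understood as $0$. *)

theory Defs
  imports Complex_Main
begin

definition F1 :: "complex \<Rightarrow> real" where
  "F1 z = (if z = 0 then 0 else (cmod z)^2 * (ln ((cmod z)^2) - 1))"

end

theory Submission
  imports Defs
begin

(* F1 z = f |z| with f r = r^2 (2 ln r - 1), so f' r = 4 r ln r and f'' r = 4 ln r + 4.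
   Taylor's formula at |z2| with Lagrange remainder 2 (|z1| - |z2|)^2 (ln xi + 1), where xi lies
   between |z1| and |z2| and so ln xi \<le> ln (max |z2| |z1|), gives the real
   inequality. The complex one reduces to it: for z2 \<noteq> 0 its right-hand side is affine in
   Re (z2 * cnj z1) with negative slope -4 (ln max + 1 - ln |z2|), and
   Re (z2 * cnj z1) \<le> |z1| |z2|. *)

lemma taylor2_upper_bound:
  fixes f f' f'' :: "real \<Rightarrow> real"
  assumes f': "\<And>y. a \<le> y \<Longrightarrow> y \<le> b \<Longrightarrow> (f has_real_derivative f' y) (at y)"
    and f'': "\<And>y. a \<le> y \<Longrightarrow> y \<le> b \<Longrightarrow> (f' has_real_derivative f'' y) (at y)"
    and bound: "\<And>y. a \<le> y \<Longrightarrow> y \<le> b \<Longrightarrow> f'' y \<le> M"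
    and c: "a \<le> c" "c \<le> b" and x: "a \<le> x" "x \<le> b"
  shows "f x \<le> f c + f' c * (x - c) + M / 2 * (x - c)^2"
proof (cases "x = c")
  case False
  let ?diff = "\<lambda>m. [f, f', f''] ! m"
  have "\<forall>m y. m < 2 \<and> a \<le> y \<and> y \<le> b \<longrightarrow> DERIV (?diff m) y :> ?diff (Suc m) y"
    using f' f'' by (auto simp: less_2_cases_iff)
  from Taylor[of 2 ?diff f a b c x, OF _ _ this c x False]
  obtain y where y: "if x < c then x < y \<and> y < c else c < y \<and> y < x"
    and taylor: "f x = f c + f' c * (x - c) + f'' y / 2 * (x - c)^2"
    by (auto simp: numeral_2_eq_2)
  have "f'' y / 2 * (x - c)^2 \<le> M / 2 * (x - c)^2"
    using bound[of y] y c x by (intro mult_right_mono) (auto split: if_splits)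
  then show ?thesis using taylor by linarith
qed simp

(* With ln 0 = 0 this also covers F1 0 = 0. *)
definition F1_radial :: "real \<Rightarrow> real" where
  "F1_radial r = r^2 * (2 * ln r - 1)"

lemma F1_eq_F1_radial: "F1 z = F1_radial (cmod z)"
  by (simp add: F1_def F1_radial_def ln_realpow)

lemma has_real_derivative_F1_radial:
  "x > 0 \<Longrightarrow> (F1_radial has_real_derivative 4 * x * ln x) (at x)"
  unfolding F1_radial_def
  by (auto intro!: derivative_eq_intros simp: power2_eq_square field_simps)

lemma has_real_derivative_F1_radial_deriv:
  "x > 0 \<Longrightarrow> ((\<lambda>x. 4 * x * ln x) has_real_derivative 4 * ln x + 4) (at x)"
  by (auto intro!: derivative_eq_intros)

lemma F1_radial_le_tangent:
  fixes s t :: real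
  assumes "0 \<le> s" "0 \<le> t"
  shows "F1_radial s \<le> F1_radial t + 4 * t * ln t * (s - t) + 2 * (s - t)^2 * (ln (max t s) + 1)"
proof (cases "s = 0 \<or> t = 0")
  case True
  then show ?thesis using assms by (auto simp: F1_radial_def algebra_simps power2_eq_square)
next
  case False
  then have pos: "0 < min s t" using assms by simp
  have "F1_radial s \<le> F1_radial t + 4 * t * ln t * (s - t) + (4 * ln (max t s) + 4) / 2 * (s - t)^2"
    using pos
    by (intro taylor2_upper_bound[where a = "min s t" and b = "max s t" and f'' = "\<lambda>y. 4 * ln y + 4"]
          has_real_derivative_F1_radial has_real_derivative_F1_radial_deriv) auto
  then show ?thesis by (simp add: field_simps)
qed

lemma Re_mult_cnj_diff: "Re (w * cnj (z - w)) = Re (w * cnj z) - (cmod w)^2"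
  unfolding cmod_power2 by (simp add: power2_eq_square algebra_simps)

lemma cmod_diff_power2: "(cmod (z - w))^2 = (cmod z)^2 + (cmod w)^2 - 2 * Re (w * cnj z)"
  unfolding cmod_power2 by (simp add: power2_eq_square algebra_simps)

lemma F1_le_tangent:
  fixes z1 z2 :: complex
  shows "F1 z1 \<le> F1 z2 + 4 * Re (z2 * cnj (z1 - z2)) * ln (cmod z2)
           + 2 * (cmod (z1 - z2))^2 * (ln (max (cmod z2) (cmod z1)) + 1)"
proof -
  define s t c L where "s = cmod z1" and "t = cmod z2" and "c = Re (z2 * cnj z1)"
    and "L = ln (max t s)"
  have "c \<le> s * t"
    using complex_Re_le_cmod[of "z2 * cnj z1"] by (simp add: c_def s_def t_def norm_mult mult.commute)
  moreover have "c = s * t" if "t = 0"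
    using that by (simp add: c_def s_def t_def)
  moreover have "ln t \<le> L" if "t > 0"
    using that by (simp add: L_def)
  moreover have "0 \<le> t"
    by (simp add: t_def)
  ultimately have slack: "0 \<le> (s * t - c) * (L + 1 - ln t)"
    by (cases "t = 0") (auto intro!: mult_nonneg_nonneg)
  have "F1 z1 \<le> F1_radial t + 4 * t * ln t * (s - t) + 2 * (s - t)^2 * (L + 1)"
    using F1_radial_le_tangent[of s t] by (simp add: F1_eq_F1_radial s_def t_def L_def)
  also have "\<dots> \<le> F1_radial t + 4 * (c - t^2) * ln t + 2 * (s^2 + t^2 - 2 * c) * (L + 1)"
    using slack by (simp add: algebra_simps power2_eq_square)
  also have "\<dots> = F1 z2 + 4 * Re (z2 * cnj (z1 - z2)) * ln (cmod z2)
           + 2 * (cmod (z1 - z2))^2 * (ln (max (cmod z2) (cmod z1)) + 1)"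
    unfolding F1_eq_F1_radial Re_mult_cnj_diff cmod_diff_power2 s_def t_def c_def L_def ..
  finally show ?thesis .
qed

theorem mainTheorem8:
  fixes z1 z2 :: complex
  defines "\<zeta> \<equiv> z1 - z2"
  shows "F1 z1 \<le> F1 z2
           + (if z2 = 0 then 0 else 2 * Re (z2 * cnj \<zeta>) * ln ((cmod z2)^2))
           + (if z2 = 0 \<and> z1 = 0 then 0
              else 2 * (cmod \<zeta>)^2 * (ln (max (cmod z2) (cmod z1)) + 1))"
proof -
  \<comment> \<open>Since ln 0 = 0, both conditional terms vanish anyway in the excluded cases.\<close>
  have "(if z2 = 0 then 0 else 2 * Re (z2 * cnj \<zeta>) * ln ((cmod z2)^2))
      = 4 * Re (z2 * cnj \<zeta>) * ln (cmod z2)"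
    by (simp add: ln_realpow)
  moreover have "(if z2 = 0 \<and> z1 = 0 then 0
              else 2 * (cmod \<zeta>)^2 * (ln (max (cmod z2) (cmod z1)) + 1))
      = 2 * (cmod \<zeta>)^2 * (ln (max (cmod z2) (cmod z1)) + 1)"
    by (simp add: \<zeta>_def)
  ultimately show ?thesis
    using F1_le_tangent[of z1 z2] by (simp add: \<zeta>_def)
qed

end
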